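(* Let $A,B\in\mathbb{S}^n$, $a,b\in\mathbb{R}^n$, $a_0,b_0\in\mathbb{R}$, $C\in\mathbb{R}^{m\times n}$, $d\in\mathbb{R}^m$, and suppose $\{x\in\mathbb{R}^n_+\mid Cx=d\}$ is nonempty and bounded and $q(x)=x^\top Ax+a^\top x+a_0>0$ on it. Then the optimal value of $\min\bigl\{\frac{x^\top Bx+b^\top x+b_0}{x^\top Ax+a^\top x+a_0}\bigm| x\ge0,\ Cx=d\bigr\}$ equals the optimal value of \[ \min\ b_0\rho+b^\top y+\langle B,Y\rangle\ \text{ s.t. }\ \begin{pmatrix}\rho&y^\top\\ y&Y\end{pmatrix}\in\mathcal{CP}_{n+1},\ \langle A,Y\rangle+\langle a,y\rangle+a_0\rho=1,\ \operatorname{Tr}\bigl(CYC^\top-Cyd^\top-dy^\top C^\top+\rho dd^\top\bigr)=0. \]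
   Context: $\mathcal{CP}_d$ is the cone of $d\times d$ completely positive matrices, i.e. matrices of the form $\sum_{i=1}^kh_ih_i^\top$ with $h_i\in\mathbb{R}^d_+$. $\langle X,Y\rangle=\operatorname{Tr}(XY^\top)$; $\mathbb{S}^n$ is the set of symmetric $n\times n$ matrices. *)

theory Defs
  imports "HOL-Analysis.Analysis"
begin

definition outer :: "real^'k \<Rightarrow> real^'l \<Rightarrow> real^'l^'k" where
  "outer u v = (\<chi> i j. u $ i * v $ j)"

definition frob_inner :: "real^'l^'k \<Rightarrow> real^'l^'k \<Rightarrow> real" where
  "frob_inner X Y = trace (X ** transpose Y)"

definition CP :: "(real^'k^'k) set" where
  "CP = {M. \<exists>hs :: (real^'k) list. (\<forall>h\<in>set hs. \<forall>i. 0 \<le> h $ i) \<and>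
              M = sum_list (map (\<lambda>h. outer h h) hs)}"

text \<open>The (n+1)x(n+1) block matrix [[rho, y^T],[y, Y]], index None playing the role of 0.\<close>
definition block :: "real \<Rightarrow> real^'n \<Rightarrow> real^'n^'n \<Rightarrow> real^('n option)^('n option)" where
  "block \<rho> y Y = (\<chi> i j. case (i, j) of
      (None, None) \<Rightarrow> \<rho>
    | (None, Some j') \<Rightarrow> y $ j'
    | (Some i', None) \<Rightarrow> y $ i'
    | (Some i', Some j') \<Rightarrow> Y $ i' $ j')"

end

theory Submission
  imports Defs
begin

text \<open>
  Every feasible point of the relaxation is a sum of rank-one terms \<open>h h\<^sup>T\<close> with
  \<open>h = (t, z) \<ge> 0\<close>. The linear constraint on the trace makes it the sum of the squares
  \<open>\<parallel>C z - t d\<parallel>\<^sup>2\<close>, so every term satisfies \<open>C z = t d\<close>. If \<open>t > 0\<close> then \<open>z / t\<close> is feasible for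
  the fractional program, and the term contributes \<open>t\<^sup>2 p(z/t)\<close> to the objective and
  \<open>t\<^sup>2 q(z/t)\<close> to the normalisation; if \<open>t = 0\<close> then \<open>z\<close> is a nonnegative direction
  of recession of the bounded feasible set, hence \<open>z = 0\<close>. Summing \<open>m q \<le> p\<close> over the terms,
  where \<open>m\<close> is the minimal ratio, bounds the relaxation from below by \<open>m\<close>; conversely the
  minimiser \<open>x\<close> lifts to the feasible rank-one point \<open>(1, x)(1, x)\<^sup>T / q(x)\<close> of value \<open>m\<close>.
\<close>

definition vec_head :: "real^('n::finite option) \<Rightarrow> real" where
  "vec_head h = h $ None"

definition vec_tail :: "real^('n::finite option) \<Rightarrow> real^'n" where
  "vec_tail h = (\<chi> i. h $ Some i)"

definition vec_cons :: "real \<Rightarrow> real^'n \<Rightarrow> real^('n::finite option)" where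
  "vec_cons t z = (\<chi> i. case i of None \<Rightarrow> t | Some j \<Rightarrow> z $ j)"

lemma vec_head_cons [simp]: "vec_head (vec_cons t z) = t"
  by (simp add: vec_head_def vec_cons_def)

lemma vec_tail_cons [simp]: "vec_tail (vec_cons t z) = z"
  by (simp add: vec_tail_def vec_cons_def vec_eq_iff)

lemma vec_cons_nonneg: "0 \<le> t \<Longrightarrow> \<forall>i. 0 \<le> z $ i \<Longrightarrow> \<forall>i. 0 \<le> vec_cons t z $ i"
  by (simp add: vec_cons_def split: option.split)

lemma sum_UNIV_option: "(\<Sum>i\<in>UNIV. f i) = f None + (\<Sum>i\<in>UNIV. f (Some i))"
  for f :: "'a::finite option \<Rightarrow> 'b::comm_monoid_add"
  by (simp add: UNIV_option_conv sum.reindex)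

lemma frob_inner_trace: "frob_inner X Y = trace (transpose X ** Y)"
  unfolding frob_inner_def trace_def matrix_matrix_mult_def transpose_def
  by (simp add: mult.commute) (rule sum.swap)

lemma frob_inner_add_right: "frob_inner M (X + Y) = frob_inner M X + frob_inner M Y"
  by (simp add: frob_inner_def trace_def matrix_matrix_mult_def transpose_def
      sum.distrib distrib_left)

lemma frob_inner_zero_right [simp]: "frob_inner M 0 = 0"
  by (simp add: frob_inner_def trace_def matrix_matrix_mult_def transpose_def)

lemma frob_inner_sum_list_right:
  "frob_inner M (sum_list (map f xs)) = (\<Sum>x\<leftarrow>xs. frob_inner M (f x))"
  by (induction xs) (simp_all add: frob_inner_add_right)

lemma frob_inner_outer: "frob_inner M (outer u v) = u \<bullet> (M *v v)"
  unfolding frob_inner_def trace_def matrix_matrix_mult_def transpose_def outer_def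
    inner_vec_def matrix_vector_mult_def
  by (simp add: sum_distrib_left mult_ac)

lemma frob_inner_block:
  "frob_inner (block r u U) (block \<rho> y Y) = r * \<rho> + 2 * (u \<bullet> y) + frob_inner U Y"
  by (simp add: frob_inner_def trace_def matrix_matrix_mult_def transpose_def block_def
      sum_UNIV_option inner_vec_def sum.distrib algebra_simps)

lemma outer_self_eq_block:
  "outer h h = block ((vec_head h)\<^sup>2) (vec_head h *\<^sub>R vec_tail h) (outer (vec_tail h) (vec_tail h))"
  unfolding vec_eq_iff
proof (intro allI)
  fix i j
  show "outer h h $ i $ j = block ((vec_head h)\<^sup>2) (vec_head h *\<^sub>R vec_tail h)
      (outer (vec_tail h) (vec_tail h)) $ i $ j"
    by (cases i; cases j)
      (simp_all add: block_def outer_def vec_head_def vec_tail_def power2_eq_square mult.commute)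
qed

lemma frob_inner_block_outer_self:
  "frob_inner (block r u U) (outer h h)
     = r * (vec_head h)\<^sup>2 + 2 * vec_head h * (u \<bullet> vec_tail h) + vec_tail h \<bullet> (U *v vec_tail h)"
  by (subst outer_self_eq_block) (simp add: frob_inner_block frob_inner_outer)

lemma CP_frob_inner_decomposition:
  assumes "M \<in> CP"
  obtains hs where "\<forall>h\<in>set hs. \<forall>i. 0 \<le> h $ i"
    and "\<And>X. frob_inner X M = (\<Sum>h\<leftarrow>hs. frob_inner X (outer h h))"
  using assms unfolding CP_def by (auto simp: frob_inner_sum_list_right)

definition quad :: "real^'n^'n \<Rightarrow> real^'n \<Rightarrow> real \<Rightarrow> real^'n \<Rightarrow> real" where
  "quad M c c0 x = x \<bullet> (M *v x) + c \<bullet> x + c0"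

lemma continuous_on_quad: "continuous_on S (quad M c c0)"
  unfolding quad_def by (intro continuous_intros)

definition quad_block :: "real^'n^'n \<Rightarrow> real^'n \<Rightarrow> real \<Rightarrow> real^('n option)^('n option)" where
  "quad_block M c c0 = block c0 ((1/2) *\<^sub>R c) M"

lemma frob_inner_quad_block:
  "frob_inner (quad_block M c c0) (block \<rho> y Y) = frob_inner M Y + c \<bullet> y + c0 * \<rho>"
  by (simp add: quad_block_def frob_inner_block)

lemma frob_inner_quad_block_outer_self:
  assumes "vec_tail h = vec_head h *\<^sub>R x"
  shows "frob_inner (quad_block M c c0) (outer h h) = (vec_head h)\<^sup>2 * quad M c c0 x"
  by (simp add: quad_block_def quad_def frob_inner_block_outer_self assms
      matrix_vector_mult_scaleR power2_eq_square distrib_left)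

text \<open>The matrix of the residual \<open>tr(C Y C\<^sup>T - C y d\<^sup>T - d y\<^sup>T C\<^sup>T + \<rho> d d\<^sup>T)\<close>.\<close>

definition residual_block :: "real^'n^'m \<Rightarrow> real^'m \<Rightarrow> real^('n option)^('n option)" where
  "residual_block C d = block (d \<bullet> d) (- (transpose C *v d)) (transpose C ** C)"

lemma trace_outer: "trace (outer u v) = u \<bullet> v"
  by (simp add: trace_def outer_def inner_vec_def)

lemma inner_matrix_vector_transpose: "(C *v y) \<bullet> d = y \<bullet> (transpose C *v d)"
  for C :: "real^'n^'m"
  by (metis dot_lmul_matrix inner_commute transpose_matrix_vector)

lemma trace_residual_eq_frob_inner:
  fixes C :: "real^'n^'m"
  shows "trace (C ** Y ** transpose C - outer (C *v y) d - outer d (C *v y) + \<rho> *\<^sub>R outer d d)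
    = frob_inner (residual_block C d) (block \<rho> y Y)"
proof -
  have "trace (C ** Y ** transpose C) = trace (transpose C ** C ** Y)"
    by (subst trace_mul_sym) (simp add: matrix_mul_assoc)
  also have "\<dots> = frob_inner (transpose C ** C) Y"
    by (simp add: frob_inner_trace matrix_transpose_mul)
  moreover have "trace (outer (C *v y) d) = y \<bullet> (transpose C *v d)"
    and "trace (outer d (C *v y)) = y \<bullet> (transpose C *v d)"
    by (simp_all only: trace_outer inner_commute[of d] inner_matrix_vector_transpose)
  moreover have "trace (\<rho> *\<^sub>R outer d d) = \<rho> * (d \<bullet> d)"
    by (simp add: trace_def outer_def inner_vec_def sum_distrib_left)
  ultimately show ?thesis
    unfolding residual_block_def frob_inner_block trace_add trace_sub
    by (simp del: transpose_matrix_vector add: mult.commute inner_commute)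
qed

lemma frob_inner_residual_block_outer_self:
  "frob_inner (residual_block C d) (outer h h) = (norm (C *v vec_tail h - vec_head h *\<^sub>R d))\<^sup>2"
proof -
  have "vec_tail h \<bullet> ((transpose C ** C) *v vec_tail h) = (C *v vec_tail h) \<bullet> (C *v vec_tail h)"
    by (simp only: matrix_vector_mul_assoc[symmetric] inner_matrix_vector_transpose)
  moreover have "(C *v vec_tail h) \<bullet> d = vec_tail h \<bullet> (transpose C *v d)"
    by (rule inner_matrix_vector_transpose)
  ultimately show ?thesis
    unfolding power2_norm_eq_inner residual_block_def frob_inner_block_outer_self
    by (simp del: transpose_matrix_vector add: inner_diff_left inner_diff_right inner_commute
        power2_eq_square algebra_simps)
qed

definition std_polyhedron :: "real^'n^'m \<Rightarrow> real^'m \<Rightarrow> (real^'n) set" where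
  "std_polyhedron C d = {x. (\<forall>i. 0 \<le> x $ i) \<and> C *v x = d}"

lemma compact_std_polyhedron:
  assumes "bounded (std_polyhedron C d)"
  shows "compact (std_polyhedron C d)"
proof -
  have "closed {x. C *v x = d}"
    by (intro closed_Collect_eq continuous_intros)
  then have "closed (std_polyhedron C d)"
    unfolding std_polyhedron_def Collect_conj_eq by (intro closed_Int closed_positive_orthant)
  with assms show ?thesis
    by (simp add: compact_eq_bounded_closed)
qed

lemma bounded_ray_eq_zero:
  fixes z :: "'a::real_normed_vector"
  assumes "bounded S" and ray: "\<And>s. 0 \<le> s \<Longrightarrow> x + s *\<^sub>R z \<in> S"
  shows "z = 0"
proof (rule ccontr)
  assume "z \<noteq> 0"
  obtain M where M: "\<And>v. v \<in> S \<Longrightarrow> norm v \<le> M"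
    using \<open>bounded S\<close> unfolding bounded_iff by blast
  define s where "s = (M + norm x + 1) / norm z"
  have "norm x \<le> M"
    using M[OF ray[OF order_refl]] by simp
  then have "0 \<le> M"
    using norm_ge_zero order_trans by blast
  then have "0 \<le> s" and s: "s * norm z = M + norm x + 1"
    using \<open>z \<noteq> 0\<close> by (simp_all add: s_def)
  have "s * norm z = norm ((x + s *\<^sub>R z) - x)"
    using \<open>0 \<le> s\<close> by simp
  also have "\<dots> \<le> norm (x + s *\<^sub>R z) + norm x"
    by (rule norm_triangle_ineq4)
  also have "\<dots> \<le> M + norm x"
    using M[OF ray[OF \<open>0 \<le> s\<close>]] by simp
  finally show False
    using s by simp
qed

lemma std_polyhedron_recession_cone_trivial:
  assumes "bounded (std_polyhedron C d)" and "x \<in> std_polyhedron C d"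
    and "\<forall>i. 0 \<le> z $ i" and "C *v z = 0"
  shows "z = 0"
  using assms(1) proof (rule bounded_ray_eq_zero)
  show "x + s *\<^sub>R z \<in> std_polyhedron C d" if "0 \<le> s" for s
    using assms(2-4) that
    by (simp add: std_polyhedron_def matrix_vector_right_distrib matrix_vector_mult_scaleR)
qed

lemma rank_one_ratio_bound:
  assumes bounded: "bounded (std_polyhedron C d)" and "x0 \<in> std_polyhedron C d"
    and ratio: "\<And>x. x \<in> std_polyhedron C d \<Longrightarrow> m * quad A a a0 x \<le> quad B b b0 x"
    and h: "\<forall>i. 0 \<le> h $ i" and Ch: "C *v vec_tail h = vec_head h *\<^sub>R d"
  shows "m * frob_inner (quad_block A a a0) (outer h h) \<le> frob_inner (quad_block B b b0) (outer h h)"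
proof (cases "vec_head h = 0")
  case True
  have "vec_tail h = 0"
    using std_polyhedron_recession_cone_trivial[OF bounded \<open>x0 \<in> _\<close>] h Ch True
    by (simp add: vec_tail_def)
  then have "vec_tail h = vec_head h *\<^sub>R 0"
    by simp
  then show ?thesis
    using True by (simp add: frob_inner_quad_block_outer_self)
next
  case False
  then have "0 < vec_head h"
    using h by (simp add: vec_head_def less_le)
  define x where "x = (1 / vec_head h) *\<^sub>R vec_tail h"
  have tail: "vec_tail h = vec_head h *\<^sub>R x"
    using False by (simp add: x_def)
  have "x \<in> std_polyhedron C d"
    using h Ch \<open>0 < vec_head h\<close>
    by (simp add: std_polyhedron_def x_def vec_tail_def matrix_vector_mult_scaleR)
  then show ?thesis
    using ratio mult_left_mono[of "m * quad A a a0 x" "quad B b b0 x" "(vec_head h)\<^sup>2"]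
    by (simp add: frob_inner_quad_block_outer_self[OF tail] mult.left_commute)
qed

lemma CP_relaxation_lower_bound:
  assumes bounded: "bounded (std_polyhedron C d)" and "x0 \<in> std_polyhedron C d"
    and ratio: "\<And>x. x \<in> std_polyhedron C d \<Longrightarrow> m * quad A a a0 x \<le> quad B b b0 x"
    and "M \<in> CP" and normalised: "frob_inner (quad_block A a a0) M = 1"
    and residual: "frob_inner (residual_block C d) M = 0"
  shows "m \<le> frob_inner (quad_block B b b0) M"
proof -
  obtain hs where hs: "\<forall>h\<in>set hs. \<forall>i. 0 \<le> h $ i"
    and M: "\<And>X. frob_inner X M = (\<Sum>h\<leftarrow>hs. frob_inner X (outer h h))"
    using CP_frob_inner_decomposition[OF \<open>M \<in> CP\<close>] by blast
  have "(\<Sum>h\<leftarrow>hs. (norm (C *v vec_tail h - vec_head h *\<^sub>R d))\<^sup>2) = 0"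
    using residual by (simp add: M frob_inner_residual_block_outer_self)
  then have "\<forall>h\<in>set hs. (norm (C *v vec_tail h - vec_head h *\<^sub>R d))\<^sup>2 = 0"
    by (subst (asm) sum_list_nonneg_eq_0_iff) auto
  then have Ch: "C *v vec_tail h = vec_head h *\<^sub>R d" if "h \<in> set hs" for h
    using that by simp
  have "m = (\<Sum>h\<leftarrow>hs. m * frob_inner (quad_block A a a0) (outer h h))"
    using normalised by (simp add: M sum_list_const_mult)
  also have "\<dots> \<le> (\<Sum>h\<leftarrow>hs. frob_inner (quad_block B b b0) (outer h h))"
    using rank_one_ratio_bound[OF bounded \<open>x0 \<in> _\<close> ratio] hs Ch by (intro sum_list_mono) blast
  also have "\<dots> = frob_inner (quad_block B b b0) M"
    by (simp add: M)
  finally show ?thesis .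
qed

lemma CP_relaxation_lift:
  assumes x: "x \<in> std_polyhedron C d" and q: "quad A a a0 x > 0"
  obtains h where "outer h h \<in> CP"
    and "frob_inner (quad_block A a a0) (outer h h) = 1"
    and "frob_inner (residual_block C d) (outer h h) = 0"
    and "frob_inner (quad_block B b b0) (outer h h) = quad B b b0 x / quad A a a0 x"
proof
  define h where "h = vec_cons (1 / sqrt (quad A a a0 x)) ((1 / sqrt (quad A a a0 x)) *\<^sub>R x)"
  have "\<forall>i. 0 \<le> h $ i"
    using x q unfolding h_def std_polyhedron_def by (intro vec_cons_nonneg) simp_all
  then show "outer h h \<in> CP"
    unfolding CP_def by (intro CollectI exI[of _ "[h]"]) simp
  have tail: "vec_tail h = vec_head h *\<^sub>R x" and head: "(vec_head h)\<^sup>2 = 1 / quad A a a0 x"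
    using q by (simp_all add: h_def power_divide)
  show "frob_inner (quad_block A a a0) (outer h h) = 1"
    using q by (simp add: frob_inner_quad_block_outer_self[OF tail] head)
  show "frob_inner (quad_block B b b0) (outer h h) = quad B b b0 x / quad A a a0 x"
    by (simp add: frob_inner_quad_block_outer_self[OF tail] head)
  show "frob_inner (residual_block C d) (outer h h) = 0"
    using x by (simp add: frob_inner_residual_block_outer_self tail matrix_vector_mult_scaleR
        std_polyhedron_def)
qed

lemma CP_relaxation_value:
  assumes bounded: "bounded (std_polyhedron C d)" and xm: "xm \<in> std_polyhedron C d"
    and "quad A a a0 xm > 0"
    and ratio: "\<And>x. x \<in> std_polyhedron C d \<Longrightarrow>
      quad B b b0 xm / quad A a a0 xm * quad A a a0 x \<le> quad B b b0 x"
  shows "Inf {frob_inner (quad_block B b b0) (block \<rho> y Y) | \<rho> y Y. block \<rho> y Y \<in> CP \<and>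
      frob_inner (quad_block A a a0) (block \<rho> y Y) = 1 \<and>
      frob_inner (residual_block C d) (block \<rho> y Y) = 0}
    = quad B b b0 xm / quad A a a0 xm"
proof (rule cInf_eq_minimum)
  obtain h where "outer h h \<in> CP" "frob_inner (quad_block A a a0) (outer h h) = 1"
    "frob_inner (residual_block C d) (outer h h) = 0"
    "frob_inner (quad_block B b b0) (outer h h) = quad B b b0 xm / quad A a a0 xm"
    using CP_relaxation_lift[OF xm \<open>quad A a a0 xm > 0\<close>] by blast
  then show "quad B b b0 xm / quad A a a0 xm \<in> {frob_inner (quad_block B b b0) (block \<rho> y Y) | \<rho> y Y.
      block \<rho> y Y \<in> CP \<and> frob_inner (quad_block A a a0) (block \<rho> y Y) = 1 \<and>
      frob_inner (residual_block C d) (block \<rho> y Y) = 0}"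
    unfolding outer_self_eq_block[of h] by force
qed (use CP_relaxation_lower_bound[OF bounded xm ratio] in blast)

lemma quad_ratio_attains_min:
  assumes "compact S" and "S \<noteq> {}" and q: "\<And>x. x \<in> S \<Longrightarrow> quad A a a0 x > 0"
  obtains xm where "xm \<in> S"
    and "\<And>x. x \<in> S \<Longrightarrow> quad B b b0 xm / quad A a a0 xm \<le> quad B b b0 x / quad A a a0 x"
proof -
  have "continuous_on S (\<lambda>x. quad B b b0 x / quad A a a0 x)"
    using q by (intro continuous_intros continuous_on_quad) force
  then show ?thesis
    using continuous_attains_inf[OF assms(1,2)] that by blast
qed

theorem corollary3:
  fixes A B :: "real^'n^'n" and a b :: "real^'n" and a0 b0 :: real
    and C :: "real^'n^'m" and d :: "real^'m"
  assumes "transpose A = A" and "transpose B = B"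
    and "{x. (\<forall>i. 0 \<le> x $ i) \<and> C *v x = d} \<noteq> {}"
    and "bounded {x. (\<forall>i. 0 \<le> x $ i) \<and> C *v x = d}"
    and "\<forall>x. (\<forall>i. 0 \<le> x $ i) \<and> C *v x = d \<longrightarrow> x \<bullet> (A *v x) + a \<bullet> x + a0 > 0"
  shows "Inf {(x \<bullet> (B *v x) + b \<bullet> x + b0) / (x \<bullet> (A *v x) + a \<bullet> x + a0) | x.
                (\<forall>i. 0 \<le> x $ i) \<and> C *v x = d}
       = Inf {b0 * \<rho> + b \<bullet> y + frob_inner B Y | \<rho> y Y.
                block \<rho> y Y \<in> CP \<and>
                frob_inner A Y + a \<bullet> y + a0 * \<rho> = 1 \<and>
                trace (C ** Y ** transpose C - outer (C *v y) d - outer d (C *v y)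
                       + \<rho> *\<^sub>R outer d d) = 0}"
proof -
  have P: "{x. (\<forall>i. 0 \<le> x $ i) \<and> C *v x = d} = std_polyhedron C d"
    by (simp add: std_polyhedron_def)
  have q: "\<And>x. x \<in> std_polyhedron C d \<Longrightarrow> quad A a a0 x > 0"
    using assms(5) by (simp add: std_polyhedron_def quad_def)
  obtain xm where xm: "xm \<in> std_polyhedron C d" and min: "\<And>x. x \<in> std_polyhedron C d \<Longrightarrow>
      quad B b b0 xm / quad A a a0 xm \<le> quad B b b0 x / quad A a a0 x"
    using quad_ratio_attains_min[OF compact_std_polyhedron[OF assms(4)[unfolded P]]
        assms(3)[unfolded P] q] by blast
  have "Inf {(x \<bullet> (B *v x) + b \<bullet> x + b0) / (x \<bullet> (A *v x) + a \<bullet> x + a0) | x.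
      (\<forall>i. 0 \<le> x $ i) \<and> C *v x = d} = quad B b b0 xm / quad A a a0 xm"
    by (rule cInf_eq_minimum) (use xm min in \<open>auto simp: quad_def std_polyhedron_def\<close>)
  moreover have "Inf {frob_inner (quad_block B b b0) (block \<rho> y Y) | \<rho> y Y. block \<rho> y Y \<in> CP \<and>
      frob_inner (quad_block A a a0) (block \<rho> y Y) = 1 \<and>
      frob_inner (residual_block C d) (block \<rho> y Y) = 0} = quad B b b0 xm / quad A a a0 xm"
    using assms(4) xm q min unfolding P
    by (intro CP_relaxation_value) (simp_all add: pos_le_divide_eq)
  moreover have "b0 * \<rho> + b \<bullet> y + frob_inner B Y = frob_inner (quad_block B b b0) (block \<rho> y Y)"
    and "frob_inner A Y + a \<bullet> y + a0 * \<rho> = frob_inner (quad_block A a a0) (block \<rho> y Y)"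
    for \<rho> y Y
    by (simp_all add: frob_inner_quad_block)
  ultimately show ?thesis
    by (simp only: trace_residual_eq_frob_inner)
qed

end
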